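(* Let $|\psi\rangle,|\phi\rangle,|e\rangle,|f\rangle$ be unit vectors in $\mathbb{C}^2$ and let $\mathcal{UE}$ be the set of unital entanglement breaking channels on $\mathcal{L}(\mathbb{C}^2)$. Then $$\max_{\Psi\in\mathcal{UE}}\left\{\frac12\langle e|\Psi(|\psi\rangle\langle\psi|)|e\rangle+\frac12\langle f|\Psi(|\phi\rangle\langle\phi|)|f\rangle\right\}=\frac12\left(1+\max\left\{|\langle\psi|\phi\rangle||\langle e|f\rangle|,\sqrt{(1-|\langle\psi|\phi\rangle|^2)(1-|\langle e|f\rangle|^2)}\right\}\right).$$ The right-hand side equals $1$ if and only if $|\langle\psi|\phi\rangle|=|\langle e|f\rangle|=1$ or $|\langle\psi|\phi\rangle|=|\langle e|f\rangle|=0$; consequently, $(|\psi\rangle,|\phi\rangle)$ is jointly convertible into $(|e\rangle,|f\rangle)$ within $\mathcal{UE}$ if and only if $|\langle\psi|\phi\rangle|=|\langle e|f\rangle|=1$ or $|\langle\psi|\phi\rangle|=|\langle e|f\rangle|=0$.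
   Context: A quantum channel (linear, completely positive, trace preserving map on $\mathcal{L}(\mathbb{C}^2)$) $\Psi$ is unital if $\Psi(I)=I$ and entanglement breaking if $(\mathrm{id}\otimes\Psi)(\rho)$ is separable for every density operator $\rho$ on $\mathbb{C}^2\otimes\mathbb{C}^2$. For a set $\mathcal{X}$ of quantum channels, $(|\psi\rangle,|\phi\rangle)$ is jointly convertible into $(|e\rangle,|f\rangle)$ within $\mathcal{X}$ if there exists $\Psi\in\mathcal{X}$ with $\Psi(|\psi\rangle\langle\psi|)=|e\rangle\langle e|$ and $\Psi(|\phi\rangle\langle\phi|)=|f\rangle\langle f|$. *)

theory Defs
  imports "HOL-Analysis.Analysis"
begin

type_synonym cvec2 = "complex^2"
type_synonym cmat2 = "complex^2^2"

definition braket :: "cvec2 \<Rightarrow> cvec2 \<Rightarrow> complex" where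
  "braket x y = (\<Sum>i\<in>UNIV. cnj (x$i) * y$i)"

definition ketbra :: "cvec2 \<Rightarrow> cvec2 \<Rightarrow> cmat2" where
  "ketbra x y = (\<chi> i j. x$i * cnj (y$j))"

definition sandwich :: "cvec2 \<Rightarrow> cmat2 \<Rightarrow> complex" where
  "sandwich x A = (\<Sum>i\<in>UNIV. \<Sum>j\<in>UNIV. cnj (x$i) * A$i$j * x$j)"

definition ctrace :: "cmat2 \<Rightarrow> complex" where
  "ctrace A = (\<Sum>i\<in>UNIV. A$i$i)"

definition cscale :: "complex \<Rightarrow> cmat2 \<Rightarrow> cmat2" where
  "cscale c A = (\<chi> i j. c * A$i$j)"

definition psd2 :: "cmat2 \<Rightarrow> bool" where
  "psd2 A \<longleftrightarrow> (\<forall>v. Im (sandwich v A) = 0 \<and> Re (sandwich v A) \<ge> 0)"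

definition density2 :: "cmat2 \<Rightarrow> bool" where
  "density2 A \<longleftrightarrow> psd2 A \<and> ctrace A = 1"

text \<open>n x n complex matrices (indices < n), used for the ancilla factor C^n.\<close>
definition ndensity :: "nat \<Rightarrow> (nat \<Rightarrow> nat \<Rightarrow> complex) \<Rightarrow> bool" where
  "ndensity n S \<longleftrightarrow>
     (\<forall>v::nat \<Rightarrow> complex. let q = (\<Sum>a<n. \<Sum>b<n. cnj (v a) * S a b * v b)
        in Im q = 0 \<and> Re q \<ge> 0) \<and> (\<Sum>a<n. S a a) = 1"

text \<open>Operators on C^n \<otimes> C^2 in block form: M a b (a, b < n) is the 2x2 block.\<close>
definition block_psd :: "nat \<Rightarrow> (nat \<Rightarrow> nat \<Rightarrow> cmat2) \<Rightarrow> bool" where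
  "block_psd n M \<longleftrightarrow>
     (\<forall>v::nat \<Rightarrow> cvec2. let q = (\<Sum>a<n. \<Sum>b<n. \<Sum>i\<in>UNIV. \<Sum>j\<in>UNIV.
                                   cnj (v a $ i) * (M a b $ i $ j) * (v b $ j))
        in Im q = 0 \<and> Re q \<ge> 0)"

definition block_density :: "nat \<Rightarrow> (nat \<Rightarrow> nat \<Rightarrow> cmat2) \<Rightarrow> bool" where
  "block_density n M \<longleftrightarrow> block_psd n M \<and> (\<Sum>a<n. ctrace (M a a)) = 1"

text \<open>Separable states on C^2 \<otimes> C^2: finite convex combinations of product states.\<close>
definition separable22 :: "(nat \<Rightarrow> nat \<Rightarrow> cmat2) \<Rightarrow> bool" where
  "separable22 M \<longleftrightarrow>
     (\<exists>m (p::nat \<Rightarrow> real) S \<tau>.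
        (\<forall>k<m. 0 \<le> p k \<and> ndensity 2 (S k) \<and> density2 (\<tau> k)) \<and>
        (\<Sum>k<m. p k) = 1 \<and>
        (\<forall>a<2. \<forall>b<2. M a b = (\<Sum>k<m. cscale (complex_of_real (p k) * S k a b) (\<tau> k))))"

definition clinear2 :: "(cmat2 \<Rightarrow> cmat2) \<Rightarrow> bool" where
  "clinear2 \<Psi> \<longleftrightarrow> (\<forall>A B. \<Psi> (A + B) = \<Psi> A + \<Psi> B) \<and> (\<forall>c A. \<Psi> (cscale c A) = cscale c (\<Psi> A))"

text \<open>Complete positivity: id_n \<otimes> \<Psi> is positive for every ancilla dimension n.\<close>
definition completely_positive2 :: "(cmat2 \<Rightarrow> cmat2) \<Rightarrow> bool" where
  "completely_positive2 \<Psi> \<longleftrightarrow>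
     (\<forall>n M. block_psd n M \<longrightarrow> block_psd n (\<lambda>a b. \<Psi> (M a b)))"

definition trace_preserving2 :: "(cmat2 \<Rightarrow> cmat2) \<Rightarrow> bool" where
  "trace_preserving2 \<Psi> \<longleftrightarrow> (\<forall>A. ctrace (\<Psi> A) = ctrace A)"

definition quantum_channel2 :: "(cmat2 \<Rightarrow> cmat2) \<Rightarrow> bool" where
  "quantum_channel2 \<Psi> \<longleftrightarrow> clinear2 \<Psi> \<and> completely_positive2 \<Psi> \<and> trace_preserving2 \<Psi>"

definition unital2 :: "(cmat2 \<Rightarrow> cmat2) \<Rightarrow> bool" where
  "unital2 \<Psi> \<longleftrightarrow> \<Psi> (mat 1) = mat 1"

definition entanglement_breaking2 :: "(cmat2 \<Rightarrow> cmat2) \<Rightarrow> bool" where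
  "entanglement_breaking2 \<Psi> \<longleftrightarrow>
     (\<forall>\<rho>. block_density 2 \<rho> \<longrightarrow> separable22 (\<lambda>a b. \<Psi> (\<rho> a b)))"

definition UE :: "(cmat2 \<Rightarrow> cmat2) set" where
  "UE = {\<Psi>. quantum_channel2 \<Psi> \<and> unital2 \<Psi> \<and> entanglement_breaking2 \<Psi>}"

definition jointly_convertible ::
  "(cmat2 \<Rightarrow> cmat2) set \<Rightarrow> cvec2 \<Rightarrow> cvec2 \<Rightarrow> cvec2 \<Rightarrow> cvec2 \<Rightarrow> bool" where
  "jointly_convertible X \<psi> \<phi> e f \<longleftrightarrow>
     (\<exists>\<Psi>\<in>X. \<Psi> (ketbra \<psi> \<psi>) = ketbra e e \<and> \<Psi> (ketbra \<phi> \<phi>) = ketbra f f)"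

end

theory Submission
  imports Defs
begin

(* Everything is computed in the Bloch picture: a unit vector x of C^2 has a unit Bloch vector
   bloch x in R^3 with |<x|y>|^2 = (1 + bloch x . bloch y) / 2, and a density matrix A has a
   Bloch vector r_A in the unit ball with <x|A|x> = (1 + r_A . bloch x) / 2.

   Feeding the maximally entangled state to an entanglement breaking channel shows that it
   measures and prepares: Psi X = sum_k 2 p_k tr (X sigma_k) tau_k.  Trace preservation and
   unitality make the Bloch vectors m_k of sigma_k and t_k of tau_k average to zero against the
   weights p_k, so the averaged fidelity is 1/2 + 1/4 sum_k p_k ((m_k.P)(t_k.E) + (m_k.Q)(t_k.F)),
   P, Q, E, F being the Bloch vectors of psi, phi, e, f.  Splitting along the orthogonal
   directions P + Q and P - Q (resp. E + F and E - F), Bessel's inequality bounds every summand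
   by max (|P+Q| |E+F|, |P-Q| |E-F|) / 2 = 2 max (ab, sqrt ((1 - a^2) (1 - b^2))), and the
   channel measuring along one of these directions and preparing along the matching one attains
   the bound.  Perfect joint conversion means fidelity 1, which forces the bound to be 1; the
   converse conversions are done by measuring in the basis psi, psi-perp and preparing e, e-perp. *)

section \<open>Bessel's inequality for two orthogonal directions\<close>

lemma mult_add_mult_le_max:
  fixes c d x y z w :: real
  assumes "0 \<le> c" "0 \<le> d" "x\<^sup>2 + y\<^sup>2 \<le> 1" "z\<^sup>2 + w\<^sup>2 \<le> 1"
  shows "c * (x * z) + d * (y * w) \<le> max c d"
proof -
  have bound: "k * (u * v) \<le> max c d * ((u\<^sup>2 + v\<^sup>2) / 2)" if "0 \<le> k" "k \<le> max c d" for k u v :: real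
  proof -
    have "u * v \<le> (u\<^sup>2 + v\<^sup>2) / 2"
      using sum_squares_bound[of u v] by (simp add: power2_eq_square)
    then have "k * (u * v) \<le> k * ((u\<^sup>2 + v\<^sup>2) / 2)" using that(1) by (rule mult_left_mono)
    also have "\<dots> \<le> max c d * ((u\<^sup>2 + v\<^sup>2) / 2)" using that(2) by (rule mult_right_mono) simp
    finally show ?thesis .
  qed
  have "c * (x * z) + d * (y * w) \<le> max c d * ((x\<^sup>2 + y\<^sup>2 + (z\<^sup>2 + w\<^sup>2)) / 2)"
    using bound[of c x z] bound[of d y w] assms(1,2) by (simp add: algebra_simps add_divide_distrib)
  also have "\<dots> \<le> max c d"
    using assms mult_left_mono[of "x\<^sup>2 + y\<^sup>2 + (z\<^sup>2 + w\<^sup>2)" 2 "max c d"] by simp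
  finally show ?thesis .
qed

lemma inner_sq_add_inner_sq_le:
  fixes m u v :: "'a::real_inner"
  assumes "u \<bullet> v = 0" "norm u \<le> 1" "norm v \<le> 1"
  shows "(m \<bullet> u)\<^sup>2 + (m \<bullet> v)\<^sup>2 \<le> (norm m)\<^sup>2"
proof -
  have "0 \<le> (norm (m - (m \<bullet> u) *\<^sub>R u - (m \<bullet> v) *\<^sub>R v))\<^sup>2" by simp
  also have "\<dots> = (norm m)\<^sup>2 - (m \<bullet> u)\<^sup>2 * (2 - (norm u)\<^sup>2) - (m \<bullet> v)\<^sup>2 * (2 - (norm v)\<^sup>2)"
    using assms(1) unfolding power2_norm_eq_inner
    by (simp add: inner_commute power2_eq_square algebra_simps)
  finally have "(m \<bullet> u)\<^sup>2 * (2 - (norm u)\<^sup>2) + (m \<bullet> v)\<^sup>2 * (2 - (norm v)\<^sup>2) \<le> (norm m)\<^sup>2"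
    by linarith
  moreover have "(m \<bullet> u)\<^sup>2 \<le> (m \<bullet> u)\<^sup>2 * (2 - (norm u)\<^sup>2)" "(m \<bullet> v)\<^sup>2 \<le> (m \<bullet> v)\<^sup>2 * (2 - (norm v)\<^sup>2)"
    using assms(2,3) by (simp_all add: mult_le_cancel_left1 power_le_one)
  ultimately show ?thesis by linarith
qed

lemma inner_orthogonal_pairs_le:
  fixes m t s d s' d' :: "'a::real_inner"
  assumes "s \<bullet> d = 0" "s' \<bullet> d' = 0" "norm m \<le> 1" "norm t \<le> 1"
  shows "(m \<bullet> s) * (t \<bullet> s') + (m \<bullet> d) * (t \<bullet> d') \<le> max (norm s * norm s') (norm d * norm d')"
proof -
  \<comment> \<open>valid for \<open>x = 0\<close> as well, since \<open>sgn 0 = 0\<close>\<close>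
  have inner_sgn: "m \<bullet> x = norm x * (m \<bullet> sgn x)" for m x :: 'a
    by (cases "x = 0") (simp_all add: sgn_div_norm)
  have bessel: "(m \<bullet> sgn x)\<^sup>2 + (m \<bullet> sgn y)\<^sup>2 \<le> 1" if "x \<bullet> y = 0" "norm m \<le> 1" for m x y :: 'a
  proof -
    have "(m \<bullet> sgn x)\<^sup>2 + (m \<bullet> sgn y)\<^sup>2 \<le> (norm m)\<^sup>2"
    proof (rule inner_sq_add_inner_sq_le)
      show "sgn x \<bullet> sgn y = 0" using that(1) by (simp add: sgn_div_norm)
    qed (simp_all add: norm_sgn)
    also have "\<dots> \<le> 1" using that(2) by (simp add: power_le_one)
    finally show ?thesis .
  qed
  show ?thesis
    using mult_add_mult_le_max[OF _ _ bessel[OF assms(1,3)] bessel[OF assms(2,4)],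
        of "norm s * norm s'" "norm d * norm d'"]
    by (subst (1 2 3 4) inner_sgn) (simp add: algebra_simps)
qed

lemma inner_unit_add_diff:
  fixes p q :: "'a::real_inner"
  assumes "norm p = 1" "norm q = 1"
  shows "(p + q) \<bullet> (p - q) = 0"
    and "(p + q) \<bullet> p = (norm (p + q))\<^sup>2 / 2" "(p + q) \<bullet> q = (norm (p + q))\<^sup>2 / 2"
    and "(p - q) \<bullet> p = (norm (p - q))\<^sup>2 / 2" "(p - q) \<bullet> q = - (norm (p - q))\<^sup>2 / 2"
  using assms unfolding power2_norm_eq_inner
  by (simp_all add: inner_add_left inner_diff_left inner_add_right inner_diff_right inner_commute
      norm_eq_1)

lemma inner_unit_pairs_le:
  fixes m t p q e f :: "'a::real_inner"
  assumes "norm p = 1" "norm q = 1" "norm e = 1" "norm f = 1" "norm m \<le> 1" "norm t \<le> 1"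
  shows "(m \<bullet> p) * (t \<bullet> e) + (m \<bullet> q) * (t \<bullet> f)
           \<le> max (norm (p + q) * norm (e + f)) (norm (p - q) * norm (e - f)) / 2"
proof -
  have "(m \<bullet> p) * (t \<bullet> e) + (m \<bullet> q) * (t \<bullet> f)
        = ((m \<bullet> (p + q)) * (t \<bullet> (e + f)) + (m \<bullet> (p - q)) * (t \<bullet> (e - f))) / 2"
    by (simp add: algebra_simps)
  also have "\<dots> \<le> max (norm (p + q) * norm (e + f)) (norm (p - q) * norm (e - f)) / 2"
    using inner_orthogonal_pairs_le[OF inner_unit_add_diff(1)[OF assms(1,2)]
        inner_unit_add_diff(1)[OF assms(3,4)] assms(5,6)]
    by (simp add: divide_right_mono)
  finally show ?thesis .
qed

lemma inner_unit_pairs_max_attained: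
  fixes p q e f :: "'a::real_inner"
  assumes p: "norm p = 1" and q: "norm q = 1" and e: "norm e = 1" and f: "norm f = 1"
  shows "\<exists>m t. norm m = 1 \<and> norm t = 1 \<and> (m \<bullet> p) * (t \<bullet> e) + (m \<bullet> q) * (t \<bullet> f)
           = max (norm (p + q) * norm (e + f)) (norm (p - q) * norm (e - f)) / 2"
proof -
  note pq = inner_unit_add_diff[OF p q] and ef = inner_unit_add_diff[OF e f]
  have inner_sgn: "sgn x \<bullet> y = (x \<bullet> y) / norm x" for x y :: 'a
    by (simp add: sgn_div_norm divide_inverse_commute)
  let ?S = "norm (p + q) * norm (e + f)" and ?D = "norm (p - q) * norm (e - f)"
  have "0 \<le> ?S" "0 \<le> ?D" by simp_all
  then consider (sum) "?S \<noteq> 0" "?D \<le> ?S" | (diff) "?D \<noteq> 0" "?S \<le> ?D" | (degenerate) "?S = 0" "?D = 0"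
    by linarith
  then show ?thesis
  proof cases
    case sum
    then have "(sgn (p + q) \<bullet> p) * (sgn (e + f) \<bullet> e) + (sgn (p + q) \<bullet> q) * (sgn (e + f) \<bullet> f)
               = max ?S ?D / 2"
      by (simp add: inner_sgn pq ef power2_eq_square)
    with sum show ?thesis
      by (intro exI[of _ "sgn (p + q)"] exI[of _ "sgn (e + f)"]) (simp add: norm_sgn)
  next
    case diff
    then have "(sgn (p - q) \<bullet> p) * (sgn (e - f) \<bullet> e) + (sgn (p - q) \<bullet> q) * (sgn (e - f) \<bullet> f)
               = max ?S ?D / 2"
      by (simp add: inner_sgn pq ef power2_eq_square max_absorb2)
    with diff show ?thesis
      by (intro exI[of _ "sgn (p - q)"] exI[of _ "sgn (e - f)"]) (simp add: norm_sgn)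
  next
    case degenerate
    \<comment> \<open>then \<open>q = - p\<close> and \<open>f = e\<close>, or \<open>q = p\<close> and \<open>f = - e\<close>\<close>
    have inner_eq: "x \<bullet> y = ((norm (x + y))\<^sup>2 - 2) / 2" "(norm (x - y))\<^sup>2 = 4 - (norm (x + y))\<^sup>2"
      if "norm x = 1" "norm y = 1" for x y :: 'a
      using dot_norm[of x y] dot_norm_neg[of x y] that by simp_all
    have "(p \<bullet> p) * (e \<bullet> e) + (p \<bullet> q) * (e \<bullet> f) = max ?S ?D / 2"
      using degenerate inner_eq[OF p q] inner_eq[OF e f] p e by (auto simp: norm_eq_1)
    then show ?thesis
      using p e by blast
  qed
qed

lemma max_overlap_le_1:
  fixes a b :: real
  assumes "0 \<le> a" "a \<le> 1" "0 \<le> b" "b \<le> 1"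
  shows "max (a * b) (sqrt ((1 - a\<^sup>2) * (1 - b\<^sup>2))) \<le> 1"
  using assms by (simp add: mult_le_one power_le_one)

lemma max_overlap_eq_1_iff:
  fixes a b :: real
  assumes "0 \<le> a" "a \<le> 1" "0 \<le> b" "b \<le> 1"
  shows "max (a * b) (sqrt ((1 - a\<^sup>2) * (1 - b\<^sup>2))) = 1 \<longleftrightarrow> (a = 1 \<and> b = 1) \<or> (a = 0 \<and> b = 0)"
proof
  assume "max (a * b) (sqrt ((1 - a\<^sup>2) * (1 - b\<^sup>2))) = 1"
  then consider "a * b = 1" | "(1 - a\<^sup>2) * (1 - b\<^sup>2) = 1"
    by (metis max_def real_sqrt_eq_1_iff)
  then show "(a = 1 \<and> b = 1) \<or> (a = 0 \<and> b = 0)"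
  proof cases
    case 1
    then show ?thesis using assms mult_left_le[of b a] mult_right_le_one_le[of a b] by auto
  next
    case 2
    have "0 \<le> 1 - a\<^sup>2" "1 - a\<^sup>2 \<le> 1" "0 \<le> 1 - b\<^sup>2" "1 - b\<^sup>2 \<le> 1"
      using assms by (simp_all add: power_le_one)
    then have "1 - a\<^sup>2 = 1" "1 - b\<^sup>2 = 1"
      using 2 mult_left_le[of "1 - b\<^sup>2" "1 - a\<^sup>2"] mult_left_le_one_le[of "1 - b\<^sup>2" "1 - a\<^sup>2"]
      by linarith+
    then show ?thesis by simp
  qed
qed auto

section \<open>Vectors and matrices on \<open>\<complex>\<^sup>2\<close>\<close>

lemma braket_expand: "braket x y = cnj (x$1) * y$1 + cnj (x$2) * y$2"
  by (simp add: braket_def sum_2)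

lemma sandwich_expand:
  "sandwich x A = cnj (x$1) * A$1$1 * x$1 + cnj (x$1) * A$1$2 * x$2
                + cnj (x$2) * A$2$1 * x$1 + cnj (x$2) * A$2$2 * x$2"
  by (simp add: sandwich_def sum_2)

lemma ctrace_expand: "ctrace A = A$1$1 + A$2$2"
  by (simp add: ctrace_def sum_2)

lemma norm_cvec2_sq: "(norm (x::cvec2))\<^sup>2 = (cmod (x$1))\<^sup>2 + (cmod (x$2))\<^sup>2"
  by (simp add: norm_vec_def L2_set_def sum_2)

lemma norm_cvec2_eq_1: "norm (x::cvec2) = 1 \<longleftrightarrow> (cmod (x$1))\<^sup>2 + (cmod (x$2))\<^sup>2 = 1"
  by (metis norm_cvec2_sq norm_ge_zero power2_eq_imp_eq one_power2 zero_le_one)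

lemma braket_self: "braket x x = of_real ((norm x)\<^sup>2)"
  unfolding norm_cvec2_sq of_real_add complex_norm_square by (simp add: braket_expand mult.commute)

lemma cmod_braket_commute: "cmod (braket y x) = cmod (braket x y)"
  by (metis braket_expand complex_cnj_add complex_cnj_mult complex_cnj_cnj complex_mod_cnj mult.commute)

lemma sandwich_add: "sandwich x (A + B) = sandwich x A + sandwich x B"
  by (simp add: sandwich_expand algebra_simps)

lemma sandwich_cscale: "sandwich x (cscale c A) = c * sandwich x A"
  by (simp add: sandwich_expand cscale_def algebra_simps)

lemma sandwich_sum: "sandwich x (\<Sum>k\<in>K. A k) = (\<Sum>k\<in>K. sandwich x (A k))"
proof -
  have "sandwich x 0 = 0" by (simp add: sandwich_expand)
  then show ?thesis by (induction K rule: infinite_finite_induct) (simp_all add: sandwich_add)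
qed

lemma ctrace_add: "ctrace (A + B) = ctrace A + ctrace B"
  by (simp add: ctrace_expand)

lemma ctrace_cscale: "ctrace (cscale c A) = c * ctrace A"
  by (simp add: ctrace_expand cscale_def algebra_simps)

lemma ctrace_sum: "ctrace (\<Sum>k\<in>K. A k) = (\<Sum>k\<in>K. ctrace (A k))"
proof -
  have "ctrace 0 = 0" by (simp add: ctrace_expand)
  then show ?thesis by (induction K rule: infinite_finite_induct) (simp_all add: ctrace_add)
qed

lemma ctrace_ketbra_mult: "ctrace (ketbra x x ** A) = sandwich x A"
  by (simp add: ctrace_expand sandwich_expand ketbra_def matrix_matrix_mult_def sum_2 algebra_simps)

lemma ctrace_ketbra: "ctrace (ketbra x x) = of_real ((norm x)\<^sup>2)"
  unfolding norm_cvec2_sq of_real_add complex_norm_square by (simp add: ctrace_expand ketbra_def)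

lemma sandwich_one: "sandwich x (mat 1) = of_real ((norm x)\<^sup>2)"
  unfolding norm_cvec2_sq of_real_add complex_norm_square
  by (simp add: sandwich_expand mat_def mult.commute)

lemma sandwich_ketbra: "sandwich w (ketbra y y) = of_real ((cmod (braket y w))\<^sup>2)"
proof -
  have "sandwich w (ketbra y y) = cnj (braket y w) * braket y w"
    by (simp add: sandwich_expand ketbra_def braket_expand algebra_simps)
  then show ?thesis by (metis complex_norm_square mult.commute)
qed

lemma density2_ketbra: "norm y = 1 \<Longrightarrow> density2 (ketbra y y)"
  by (simp add: density2_def psd2_def sandwich_ketbra ctrace_ketbra)

definition perp :: "cvec2 \<Rightarrow> cvec2" where
  "perp u = vector [- cnj (u$2), cnj (u$1)]"

lemma perp_nth [simp]: "perp u $ 1 = - cnj (u$2)" "perp u $ 2 = cnj (u$1)"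
  by (simp_all add: perp_def)

lemma norm_perp: "norm (perp u) = norm u"
proof -
  have "(norm (perp u))\<^sup>2 = (norm u)\<^sup>2" by (simp add: norm_cvec2_sq add.commute)
  then show ?thesis by (rule power2_eq_imp_eq) simp_all
qed

lemma cmod_braket_sq_add_perp:
  "(cmod (braket x u))\<^sup>2 + (cmod (braket x (perp u)))\<^sup>2 = (norm x)\<^sup>2 * (norm u)\<^sup>2"
  unfolding braket_expand norm_cvec2_sq cmod_power2 by (simp add: algebra_simps power2_eq_square)

lemma cmod_braket_sq_perp:
  assumes "norm x = 1" "norm u = 1"
  shows "(cmod (braket x (perp u)))\<^sup>2 = 1 - (cmod (braket x u))\<^sup>2"
  using cmod_braket_sq_add_perp[of x u] assms by simp

lemma cmod_braket_le_1:
  assumes "norm x = 1" "norm y = 1"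
  shows "cmod (braket x y) \<le> 1"
proof -
  have "(cmod (braket x y))\<^sup>2 \<le> 1"
    using cmod_braket_sq_perp[OF assms] zero_le_power2[of "cmod (braket x (perp y))"] by linarith
  then show ?thesis by (simp add: power_le_one_iff)
qed

lemma sandwich_add_perp:
  assumes "norm u = 1"
  shows "sandwich u X + sandwich (perp u) X = ctrace X"
proof -
  have "sandwich u X + sandwich (perp u) X = braket u u * ctrace X"
    by (simp add: sandwich_expand ctrace_expand braket_expand algebra_simps)
  then show ?thesis using assms by (simp add: braket_self)
qed

lemma ketbra_add_perp:
  assumes "norm v = 1"
  shows "ketbra v v + ketbra (perp v) (perp v) = mat 1"
  using braket_self[of v] assms
  by (simp add: vec_eq_iff forall_2 ketbra_def mat_def braket_expand algebra_simps)

lemma ketbra_eq_if_cmod_braket_eq_1: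
  assumes "norm e = 1" "norm f = 1" "cmod (braket e f) = 1"
  shows "ketbra e e = ketbra f f"
proof -
  \<comment> \<open>the squared Hilbert-Schmidt distance of the two projections is \<open>2 - 2 |<e|f>|\<^sup>2\<close>\<close>
  have "(cmod (e$1 * cnj (e$1) - f$1 * cnj (f$1)))\<^sup>2 + (cmod (e$1 * cnj (e$2) - f$1 * cnj (f$2)))\<^sup>2
       + (cmod (e$2 * cnj (e$1) - f$2 * cnj (f$1)))\<^sup>2 + (cmod (e$2 * cnj (e$2) - f$2 * cnj (f$2)))\<^sup>2
     = ((norm e)\<^sup>2)\<^sup>2 + ((norm f)\<^sup>2)\<^sup>2 - 2 * (cmod (braket e f))\<^sup>2"
    unfolding norm_cvec2_sq braket_expand cmod_power2 by (simp add: power2_eq_square algebra_simps)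
  then have "(cmod (e$1 * cnj (e$1) - f$1 * cnj (f$1)))\<^sup>2 + (cmod (e$1 * cnj (e$2) - f$1 * cnj (f$2)))\<^sup>2
       + (cmod (e$2 * cnj (e$1) - f$2 * cnj (f$1)))\<^sup>2 + (cmod (e$2 * cnj (e$2) - f$2 * cnj (f$2)))\<^sup>2 = 0"
    using assms by simp
  then show ?thesis
    by (simp add: vec_eq_iff forall_2 ketbra_def add_nonneg_eq_0_iff)
qed

lemma psd2_entries:
  assumes "psd2 A"
  shows "Im (A$1$1) = 0" "Im (A$2$2) = 0" "0 \<le> Re (A$1$1)" "0 \<le> Re (A$2$2)"
    and "A$2$1 = cnj (A$1$2)" "(cmod (A$1$2))\<^sup>2 \<le> Re (A$1$1) * Re (A$2$2)"
proof -
  define q where "q x y = sandwich (vector [x, y]) A" for x y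
  have q: "Im (q x y) = 0" "0 \<le> Re (q x y)" for x y
    using assms by (simp_all add: psd2_def q_def)
  have q_expand: "q x y = cnj x * A$1$1 * x + cnj x * A$1$2 * y + cnj y * A$2$1 * x + cnj y * A$2$2 * y"
    for x y by (simp add: q_def sandwich_expand)
  show diag: "Im (A$1$1) = 0" "Im (A$2$2) = 0" "0 \<le> Re (A$1$1)" "0 \<le> Re (A$2$2)"
    using q[of 1 0] q[of 0 1] by (simp_all add: q_expand)
  have "Im (A$1$2) + Im (A$2$1) = 0" "Re (A$1$2) - Re (A$2$1) = 0"
    using q(1)[of 1 1] q(1)[of 1 \<i>] diag by (simp_all add: q_expand algebra_simps)
  then show herm: "A$2$1 = cnj (A$1$2)" by (simp add: complex_eq_iff)
  have "0 \<le> Re (q (- A$1$2) (Re (A$1$1)))" "0 \<le> Re (q (Re (A$2$2)) (- A$2$1))"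
    "0 \<le> Re (q 1 (- A$2$1))"
    by (rule q)+
  then have "0 \<le> Re (A$1$1) * (Re (A$1$1) * Re (A$2$2) - (cmod (A$1$2))\<^sup>2)"
    "0 \<le> Re (A$2$2) * (Re (A$1$1) * Re (A$2$2) - (cmod (A$1$2))\<^sup>2)"
    "0 \<le> Re (A$1$1) + (cmod (A$1$2))\<^sup>2 * Re (A$2$2) - 2 * (cmod (A$1$2))\<^sup>2"
    using diag herm unfolding q_expand cmod_power2 by (simp_all add: algebra_simps power2_eq_square)
  then show "(cmod (A$1$2))\<^sup>2 \<le> Re (A$1$1) * Re (A$2$2)"
    using diag(3,4) zero_le_mult_iff[of "Re (A$1$1)"] zero_le_mult_iff[of "Re (A$2$2)"]
    by (cases "Re (A$1$1) = 0 \<and> Re (A$2$2) = 0") auto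
qed

lemma psd2_eq_cscale_density2:
  assumes "psd2 A"
  obtains D where "density2 D" and "A = cscale (of_real (Re (ctrace A))) D"
proof (cases "Re (ctrace A) = 0")
  case True
  note entries = psd2_entries[OF assms]
  then have "Re (A$1$1) = 0" "Re (A$2$2) = 0" using True by (simp_all add: ctrace_expand)
  then have "A$1$1 = 0" "A$2$2 = 0" "A$1$2 = 0" "A$2$1 = 0"
    using entries by (simp_all add: complex_eq_iff)
  then have "A = cscale (of_real (Re (ctrace A))) (ketbra (vector [1, 0]) (vector [1, 0]))"
    using True by (simp add: cscale_def vec_eq_iff forall_2)
  moreover have "density2 (ketbra (vector [1, 0]) (vector [1, 0]) :: cmat2)"
    by (rule density2_ketbra) (simp add: norm_cvec2_eq_1)
  ultimately show ?thesis by (rule that[rotated])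
next
  case False
  define t where "t = Re (ctrace A)"
  have "Im (ctrace A) = 0" "0 \<le> t"
    using psd2_entries[OF assms] by (simp_all add: ctrace_expand t_def)
  then have t: "ctrace A = of_real t" "t > 0"
    using False by (simp_all add: complex_eq_iff t_def)
  define D where "D = cscale (of_real (1 / t)) A"
  have "density2 D"
    using assms t unfolding density2_def psd2_def D_def
    by (simp add: sandwich_cscale ctrace_cscale Re_divide_of_real Im_divide_of_real)
  moreover have "A = cscale (of_real t) D"
    using t by (simp add: D_def cscale_def vec_eq_iff)
  ultimately show ?thesis unfolding t_def by (rule that)
qed

section \<open>Bloch vectors\<close>

definition bloch :: "cvec2 \<Rightarrow> real^3" where
  "bloch x = vector [2 * Re (cnj (x$1) * x$2), 2 * Im (cnj (x$1) * x$2),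
                     (cmod (x$1))\<^sup>2 - (cmod (x$2))\<^sup>2]"

lemma inner_bloch: "bloch x \<bullet> bloch y = 2 * (cmod (braket x y))\<^sup>2 - (norm x)\<^sup>2 * (norm y)\<^sup>2"
  unfolding bloch_def braket_expand norm_cvec2_sq cmod_power2
  by (simp add: inner_vec_def sum_3 power2_eq_square algebra_simps)

lemma cmod_braket_sq_bloch:
  assumes "norm x = 1" "norm y = 1"
  shows "(cmod (braket x y))\<^sup>2 = (1 + bloch x \<bullet> bloch y) / 2"
  using assms by (simp add: inner_bloch)

lemma norm_bloch: "norm (bloch x) = (norm x)\<^sup>2"
proof -
  have "(cmod (braket x x))\<^sup>2 = (norm x)\<^sup>2 * (norm x)\<^sup>2"
    unfolding braket_self by (simp add: power2_eq_square norm_mult)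
  then have "(norm (bloch x))\<^sup>2 = ((norm x)\<^sup>2)\<^sup>2"
    unfolding power2_norm_eq_inner[of "bloch x"] inner_bloch by (simp add: power2_eq_square)
  then show ?thesis by (rule power2_eq_imp_eq) simp_all
qed

lemma
  assumes "norm x = 1" "norm y = 1"
  shows norm_bloch_add: "norm (bloch x + bloch y) = 2 * cmod (braket x y)"
    and norm_bloch_diff: "norm (bloch x - bloch y) = 2 * sqrt (1 - (cmod (braket x y))\<^sup>2)"
proof -
  have "(norm (bloch x + bloch y))\<^sup>2 = (2 * cmod (braket x y))\<^sup>2"
    using dot_norm[of "bloch x" "bloch y"] assms by (simp add: inner_bloch norm_bloch power2_eq_square)
  then show "norm (bloch x + bloch y) = 2 * cmod (braket x y)"
    by (rule power2_eq_imp_eq) simp_all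
  have "(norm (bloch x - bloch y))\<^sup>2 = 4 * (1 - (cmod (braket x y))\<^sup>2)"
    using dot_norm_neg[of "bloch x" "bloch y"] assms by (simp add: inner_bloch norm_bloch)
  then show "norm (bloch x - bloch y) = 2 * sqrt (1 - (cmod (braket x y))\<^sup>2)"
    by (metis real_sqrt_unique norm_ge_zero real_sqrt_mult real_sqrt_four)
qed

lemma max_norm_bloch_pairs:
  assumes "norm x = 1" "norm y = 1" "norm e = 1" "norm f = 1"
  shows "max (norm (bloch x + bloch y) * norm (bloch e + bloch f))
             (norm (bloch x - bloch y) * norm (bloch e - bloch f)) / 2
       = 2 * max (cmod (braket x y) * cmod (braket e f))
                 (sqrt ((1 - (cmod (braket x y))\<^sup>2) * (1 - (cmod (braket e f))\<^sup>2)))"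
  using assms by (simp add: norm_bloch_add norm_bloch_diff real_sqrt_mult max_def)

lemma bloch_surj:
  fixes w :: "real^3"
  assumes "norm w = 1"
  obtains x where "norm x = 1" "bloch x = w"
proof -
  have w: "(w$1)\<^sup>2 + (w$2)\<^sup>2 + (w$3)\<^sup>2 = 1"
    using assms unfolding norm_eq_1 by (simp add: inner_vec_def sum_3 power2_eq_square)
  then have "(w$3)\<^sup>2 \<le> 1"
    using zero_le_power2[of "w$1"] zero_le_power2[of "w$2"] by linarith
  then have w3: "-1 \<le> w$3" by (simp add: abs_square_le_1)
  show ?thesis
  proof (cases "w$3 = -1")
    case True
    then have "w$1 = 0" "w$2 = 0" using w by simp_all
    moreover have "norm (vector [0, 1] :: cvec2) = 1"
      by (simp add: norm_cvec2_eq_1)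
    ultimately show ?thesis
      using True by (intro that[of "vector [0, 1]"]) (simp_all add: bloch_def vec_eq_iff forall_3)
  next
    case False
    define r where "r = sqrt ((1 + w$3) / 2)"
    have r: "r > 0" "r\<^sup>2 = (1 + w$3) / 2" using False w3 by (simp_all add: r_def)
    define x :: cvec2 where "x = vector [of_real r, Complex (w$1) (w$2) / of_real (2 * r)]"
    have x2: "(cmod (x$2))\<^sup>2 = (1 - w$3) / 2"
    proof -
      have "(cmod (x$2))\<^sup>2 = ((w$1)\<^sup>2 + (w$2)\<^sup>2) / (4 * r\<^sup>2)"
        using r by (simp add: x_def norm_divide cmod_power2 power_divide power_mult_distrib)
      also have "\<dots> = (1 - w$3) * (1 + w$3) / (2 * (1 + w$3))"
      proof -
        have "(w$1)\<^sup>2 + (w$2)\<^sup>2 = (1 - w$3) * (1 + w$3)" "4 * r\<^sup>2 = 2 * (1 + w$3)"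
          using w r(2) by (simp_all add: algebra_simps power2_eq_square)
        then show ?thesis by (simp only:)
      qed
      also have "\<dots> = (1 - w$3) / 2" using False w3 by (simp add: field_simps)
      finally show ?thesis .
    qed
    have "norm x = 1"
      using x2 r by (simp add: norm_cvec2_eq_1 x_def)
    moreover have "bloch x = w"
      using x2 r by (simp add: bloch_def x_def vec_eq_iff forall_3 field_simps)
    ultimately show ?thesis by (rule that)
  qed
qed

text \<open>The Bloch vector \<open>r\<close> of a density matrix \<open>A = (I + r\<^sub>1 X + r\<^sub>2 Y + r\<^sub>3 Z) / 2\<close>, with
  \<open>X, Y, Z\<close> the Pauli matrices; for \<open>A = ketbra x x\<close> it is \<open>bloch x\<close>.\<close>
definition bloch_mat :: "cmat2 \<Rightarrow> real^3" where
  "bloch_mat A = vector [2 * Re (A$1$2), - 2 * Im (A$1$2), Re (A$1$1) - Re (A$2$2)]"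

lemma
  assumes "density2 A"
  shows norm_bloch_mat_le_1: "norm (bloch_mat A) \<le> 1"
    and Re_sandwich_density2: "Re (sandwich x A) = ((norm x)\<^sup>2 + bloch_mat A \<bullet> bloch x) / 2"
proof -
  have psd: "psd2 A" and "A$1$1 + A$2$2 = 1"
    using assms by (simp_all add: density2_def ctrace_expand)
  then have tr: "Re (A$1$1) + Re (A$2$2) = 1"
    by (metis one_complex.sel(1) plus_complex.sel(1))
  note entries = psd2_entries[OF psd]
  have "(norm (bloch_mat A))\<^sup>2 = bloch_mat A \<bullet> bloch_mat A"
    by (rule power2_norm_eq_inner)
  also have "\<dots> = (Re (A$1$1) + Re (A$2$2))\<^sup>2 - 4 * (Re (A$1$1) * Re (A$2$2) - (cmod (A$1$2))\<^sup>2)"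
    unfolding bloch_mat_def cmod_power2 by (simp add: inner_vec_def sum_3 algebra_simps power2_eq_square)
  also have "\<dots> \<le> 1" using entries(6) unfolding tr by simp
  finally show "norm (bloch_mat A) \<le> 1" by (simp add: power_le_one_iff)
  have expand: "Re (sandwich x A) = (cmod (x$1))\<^sup>2 * Re (A$1$1) + (cmod (x$2))\<^sup>2 * Re (A$2$2)
                                     + 2 * Re (A$1$2 * (cnj (x$1) * x$2))"
    using entries(1,2,5) unfolding sandwich_expand cmod_power2 by (simp add: algebra_simps power2_eq_square)
  have A22: "Re (A$2$2) = 1 - Re (A$1$1)" using tr by simp
  show "Re (sandwich x A) = ((norm x)\<^sup>2 + bloch_mat A \<bullet> bloch x) / 2"
    unfolding expand bloch_mat_def A22
    by (simp add: bloch_def inner_vec_def sum_3 norm_cvec2_sq algebra_simps)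
qed

corollary Re_sandwich_density2_unit:
  assumes "density2 A" "norm x = 1"
  shows "2 * Re (sandwich x A) = 1 + bloch_mat A \<bullet> bloch x"
proof -
  have "Re (sandwich x A) = (1 + bloch_mat A \<bullet> bloch x) / 2"
    using Re_sandwich_density2[OF assms(1), of x] assms(2) by simp
  then show ?thesis by simp
qed

section \<open>Entanglement breaking channels measure and prepare\<close>

definition nat_of_2 :: "2 \<Rightarrow> nat" where
  "nat_of_2 i = (if i = 1 then 0 else 1)"

definition two_of_nat :: "nat \<Rightarrow> 2" where
  "two_of_nat a = (if a = 0 then 1 else 2)"

lemma two_of_nat_nat_of_2 [simp]: "two_of_nat (nat_of_2 i) = i"
  using exhaust_2[of i] by (auto simp: two_of_nat_def nat_of_2_def)

lemma nat_of_2_two_of_nat [simp]: "a < 2 \<Longrightarrow> nat_of_2 (two_of_nat a) = a"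
  by (simp add: two_of_nat_def nat_of_2_def)

lemma sum_lessThan_2: "(\<Sum>a<2. f a) = f 0 + f (1::nat)"
  by (simp add: numeral_2_eq_2)

definition mat2_of :: "(nat \<Rightarrow> nat \<Rightarrow> complex) \<Rightarrow> cmat2" where
  "mat2_of S = (\<chi> i j. S (nat_of_2 i) (nat_of_2 j))"

lemma psd2_transpose_mat2_of_iff:
  "psd2 (transpose (mat2_of S))
   \<longleftrightarrow> (\<forall>v. Im (\<Sum>a<2. \<Sum>b<2. cnj (v a) * S a b * v b) = 0
            \<and> 0 \<le> Re (\<Sum>a<2. \<Sum>b<2. cnj (v a) * S a b * v b))"
proof -
  have to_mat: "(\<Sum>a<2. \<Sum>b<2. cnj (v a) * S a b * v b)
                = sandwich (vector [cnj (v 0), cnj (v 1)]) (transpose (mat2_of S))" for v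
    by (simp add: sum_lessThan_2 sandwich_expand transpose_def mat2_of_def nat_of_2_def algebra_simps)
  have to_nat: "sandwich w (transpose (mat2_of S))
                = (\<Sum>a<2. \<Sum>b<2. cnj (cnj (w $ two_of_nat a)) * S a b * cnj (w $ two_of_nat b))" for w
    by (simp add: sum_lessThan_2 sandwich_expand transpose_def mat2_of_def nat_of_2_def
        two_of_nat_def algebra_simps)
  show ?thesis
    unfolding psd2_def
  proof (intro iffI allI)
    fix w
    assume "\<forall>v. Im (\<Sum>a<2. \<Sum>b<2. cnj (v a) * S a b * v b) = 0
              \<and> 0 \<le> Re (\<Sum>a<2. \<Sum>b<2. cnj (v a) * S a b * v b)"
    then show "Im (sandwich w (transpose (mat2_of S))) = 0 \<and> 0 \<le> Re (sandwich w (transpose (mat2_of S)))"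
      unfolding to_nat by (rule spec)
  next
    fix v
    assume "\<forall>w. Im (sandwich w (transpose (mat2_of S))) = 0 \<and> 0 \<le> Re (sandwich w (transpose (mat2_of S)))"
    then show "Im (\<Sum>a<2. \<Sum>b<2. cnj (v a) * S a b * v b) = 0
               \<and> 0 \<le> Re (\<Sum>a<2. \<Sum>b<2. cnj (v a) * S a b * v b)"
      unfolding to_mat by (rule spec)
  qed
qed

lemma ndensity2_iff_density2_transpose: "ndensity 2 S \<longleftrightarrow> density2 (transpose (mat2_of S))"
proof -
  have "(\<Sum>a<2. S a a) = ctrace (transpose (mat2_of S))"
    by (simp add: sum_lessThan_2 ctrace_expand transpose_def mat2_of_def nat_of_2_def)
  then show ?thesis
    unfolding ndensity_def density2_def Let_def psd2_transpose_mat2_of_iff by simp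
qed

definition max_entangled :: "nat \<Rightarrow> nat \<Rightarrow> cmat2" where
  "max_entangled a b = (\<chi> i j. if nat_of_2 i = a \<and> nat_of_2 j = b then 1/2 else 0)"

lemma block_density_max_entangled: "block_density 2 max_entangled"
  unfolding block_density_def block_psd_def Let_def
proof (intro conjI allI)
  fix v :: "nat \<Rightarrow> cvec2"
  let ?z = "v 0 $ 1 + v 1 $ 2"
  let ?q = "\<Sum>a<2. \<Sum>b<2. \<Sum>i\<in>UNIV. \<Sum>j\<in>UNIV. cnj (v a $ i) * (max_entangled a b $ i $ j) * (v b $ j)"
  have "?q = ?z * cnj ?z / 2"
    by (simp add: sum_lessThan_2 sum_2 max_entangled_def nat_of_2_def algebra_simps add_divide_distrib)
  also have "\<dots> = of_real ((cmod ?z)\<^sup>2 / 2)"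
    by (metis complex_norm_square of_real_divide of_real_numeral)
  finally have q: "?q = of_real ((cmod ?z)\<^sup>2 / 2)" .
  show "Im ?q = 0" "0 \<le> Re ?q"
    unfolding q by simp_all
next
  show "(\<Sum>a<2. ctrace (max_entangled a a)) = 1"
    by (simp add: sum_lessThan_2 ctrace_expand max_entangled_def nat_of_2_def)
qed

lemma sum_cscale_max_entangled:
  "X = (\<Sum>i\<in>UNIV. \<Sum>j\<in>UNIV. cscale (2 * X$i$j) (max_entangled (nat_of_2 i) (nat_of_2 j)))"
  by (simp add: vec_eq_iff forall_2 sum_2 max_entangled_def nat_of_2_def cscale_def)

lemma clinear2_sum:
  assumes "clinear2 \<Psi>"
  shows "\<Psi> (\<Sum>k\<in>K. A k) = (\<Sum>k\<in>K. \<Psi> (A k))"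
proof -
  have "\<Psi> 0 = 0"
    using assms unfolding clinear2_def by (metis add_cancel_right_right)
  then show ?thesis
    using assms by (induction K rule: infinite_finite_induct) (simp_all add: clinear2_def)
qed

locale measure_prepare_repr =
  fixes \<Psi> :: "cmat2 \<Rightarrow> cmat2" and m :: nat and p :: "nat \<Rightarrow> real" and \<sigma> \<tau> :: "nat \<Rightarrow> cmat2"
  assumes weight_nonneg: "\<And>k. k < m \<Longrightarrow> 0 \<le> p k"
    and density_\<sigma>: "\<And>k. k < m \<Longrightarrow> density2 (\<sigma> k)"
    and density_\<tau>: "\<And>k. k < m \<Longrightarrow> density2 (\<tau> k)"
    and sum_weights: "(\<Sum>k<m. p k) = 1"
    and channel_eq: "\<And>X. \<Psi> X = (\<Sum>k<m. cscale (of_real (2 * p k) * ctrace (X ** \<sigma> k)) (\<tau> k))"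

lemma entanglement_breaking_measure_prepare_repr:
  assumes "clinear2 \<Psi>" and "entanglement_breaking2 \<Psi>"
  obtains m p \<sigma> \<tau> where "measure_prepare_repr \<Psi> m p \<sigma> \<tau>"
proof -
  have "separable22 (\<lambda>a b. \<Psi> (max_entangled a b))"
    using assms(2) block_density_max_entangled unfolding entanglement_breaking2_def by blast
  then obtain m and p :: "nat \<Rightarrow> real" and S \<tau>
    where decomp: "\<forall>k<m. 0 \<le> p k \<and> ndensity 2 (S k) \<and> density2 (\<tau> k)" "(\<Sum>k<m. p k) = 1"
      "\<forall>a<2. \<forall>b<2. \<Psi> (max_entangled a b) = (\<Sum>k<m. cscale (of_real (p k) * S k a b) (\<tau> k))"
    unfolding separable22_def by blast
  have "\<Psi> X = (\<Sum>k<m. cscale (of_real (2 * p k) * ctrace (X ** transpose (mat2_of (S k)))) (\<tau> k))"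
    for X
  proof -
    have "\<Psi> X = (\<Sum>i\<in>UNIV. \<Sum>j\<in>UNIV. cscale (2 * X$i$j) (\<Psi> (max_entangled (nat_of_2 i) (nat_of_2 j))))"
      by (subst sum_cscale_max_entangled) (use assms(1) in \<open>simp add: clinear2_sum clinear2_def\<close>)
    also have "\<dots> = (\<Sum>i\<in>UNIV. \<Sum>j\<in>UNIV. cscale (2 * X$i$j)
                       (\<Sum>k<m. cscale (of_real (p k) * S k (nat_of_2 i) (nat_of_2 j)) (\<tau> k)))"
      using decomp(3) by (simp add: nat_of_2_def)
    also have "\<dots> = (\<Sum>k<m. cscale (of_real (2 * p k) * ctrace (X ** transpose (mat2_of (S k)))) (\<tau> k))"
      by (simp add: vec_eq_iff cscale_def sum_distrib_left sum_2 ctrace_expand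
          matrix_matrix_mult_def transpose_def mat2_of_def sum.distrib algebra_simps)
    finally show ?thesis .
  qed
  with decomp(1,2) have "measure_prepare_repr \<Psi> m p (\<lambda>k. transpose (mat2_of (S k))) \<tau>"
    by unfold_locales (simp_all add: ndensity2_iff_density2_transpose)
  then show ?thesis by (rule that)
qed

context measure_prepare_repr
begin

lemma Re_sandwich_ketbra:
  assumes "norm x = 1" "norm y = 1"
  shows "Re (sandwich y (\<Psi> (ketbra x x)))
         = (\<Sum>k<m. p k * ((1 + bloch_mat (\<sigma> k) \<bullet> bloch x) * (1 + bloch_mat (\<tau> k) \<bullet> bloch y))) / 2"
proof -
  have "Re (sandwich y (\<Psi> (ketbra x x)))
        = (\<Sum>k<m. p k * (2 * Re (sandwich x (\<sigma> k))) * (2 * Re (sandwich y (\<tau> k)))) / 2"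
    unfolding channel_eq sandwich_sum sandwich_cscale ctrace_ketbra_mult Re_sum sum_divide_distrib
    using density_\<sigma> density_\<tau> by (intro sum.cong) (simp_all add: density2_def psd2_def)
  also have "\<dots> = (\<Sum>k<m. p k * ((1 + bloch_mat (\<sigma> k) \<bullet> bloch x) * (1 + bloch_mat (\<tau> k) \<bullet> bloch y))) / 2"
    using assms density_\<sigma> density_\<tau> by (simp add: Re_sandwich_density2_unit mult.assoc)
  finally show ?thesis .
qed

lemma bloch_\<sigma>_balanced:
  assumes "trace_preserving2 \<Psi>" "norm x = 1"
  shows "(\<Sum>k<m. p k * (bloch_mat (\<sigma> k) \<bullet> bloch x)) = 0"
proof -
  have "1 = Re (ctrace (\<Psi> (ketbra x x)))"
    using assms by (simp add: trace_preserving2_def ctrace_ketbra)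
  also have "\<dots> = (\<Sum>k<m. p k * (2 * Re (sandwich x (\<sigma> k))))"
    unfolding channel_eq ctrace_sum ctrace_cscale ctrace_ketbra_mult Re_sum
    using density_\<sigma> density_\<tau> by (intro sum.cong) (simp_all add: density2_def psd2_def)
  also have "\<dots> = 1 + (\<Sum>k<m. p k * (bloch_mat (\<sigma> k) \<bullet> bloch x))"
    using assms density_\<sigma> by (simp add: Re_sandwich_density2_unit sum_weights algebra_simps sum.distrib)
  finally show ?thesis by simp
qed

lemma bloch_\<tau>_balanced:
  assumes "unital2 \<Psi>" "norm y = 1"
  shows "(\<Sum>k<m. p k * (bloch_mat (\<tau> k) \<bullet> bloch y)) = 0"
proof -
  have "1 = Re (sandwich y (\<Psi> (mat 1)))"
    using assms by (simp add: unital2_def sandwich_one)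
  also have "\<dots> = (\<Sum>k<m. p k * (2 * Re (sandwich y (\<tau> k))))"
    unfolding channel_eq sandwich_sum sandwich_cscale matrix_mul_lid Re_sum
    using density_\<sigma> density_\<tau> by (intro sum.cong) (simp_all add: density2_def psd2_def)
  also have "\<dots> = 1 + (\<Sum>k<m. p k * (bloch_mat (\<tau> k) \<bullet> bloch y))"
    using assms density_\<tau> by (simp add: Re_sandwich_density2_unit sum_weights algebra_simps sum.distrib)
  finally show ?thesis by simp
qed

lemma Re_sandwich_ketbra_balanced:
  assumes "trace_preserving2 \<Psi>" "unital2 \<Psi>" "norm x = 1" "norm y = 1"
  shows "Re (sandwich y (\<Psi> (ketbra x x)))
         = (1 + (\<Sum>k<m. p k * ((bloch_mat (\<sigma> k) \<bullet> bloch x) * (bloch_mat (\<tau> k) \<bullet> bloch y)))) / 2"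
  using Re_sandwich_ketbra[OF assms(3,4)] bloch_\<sigma>_balanced[OF assms(1,3)] bloch_\<tau>_balanced[OF assms(2,4)]
  by (simp add: algebra_simps sum.distrib sum_weights)

lemma fidelity_sum_le:
  assumes "trace_preserving2 \<Psi>" "unital2 \<Psi>"
    and \<psi>: "norm \<psi> = 1" and \<phi>: "norm \<phi> = 1" and e: "norm e = 1" and f: "norm f = 1"
  shows "Re (sandwich e (\<Psi> (ketbra \<psi> \<psi>))) / 2 + Re (sandwich f (\<Psi> (ketbra \<phi> \<phi>))) / 2
         \<le> (1 + max (cmod (braket \<psi> \<phi>) * cmod (braket e f))
                    (sqrt ((1 - (cmod (braket \<psi> \<phi>))\<^sup>2) * (1 - (cmod (braket e f))\<^sup>2)))) / 2"
proof -
  define r t where "r k = bloch_mat (\<sigma> k)" and "t k = bloch_mat (\<tau> k)" for k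
  let ?B = "max (norm (bloch \<psi> + bloch \<phi>) * norm (bloch e + bloch f))
                (norm (bloch \<psi> - bloch \<phi>) * norm (bloch e - bloch f)) / 2"
  have "(\<Sum>k<m. p k * ((r k \<bullet> bloch \<psi>) * (t k \<bullet> bloch e) + (r k \<bullet> bloch \<phi>) * (t k \<bullet> bloch f)))
        \<le> (\<Sum>k<m. p k * ?B)"
  proof (rule sum_mono, rule mult_left_mono)
    fix k assume "k \<in> {..<m}"
    then have "0 \<le> p k" "density2 (\<sigma> k)" "density2 (\<tau> k)"
      using weight_nonneg density_\<sigma> density_\<tau> by simp_all
    then show "0 \<le> p k"
      and "(r k \<bullet> bloch \<psi>) * (t k \<bullet> bloch e) + (r k \<bullet> bloch \<phi>) * (t k \<bullet> bloch f) \<le> ?B"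
      unfolding r_def t_def
      by (simp, intro inner_unit_pairs_le) (simp_all add: norm_bloch \<psi> \<phi> e f norm_bloch_mat_le_1)
  qed
  also have "\<dots> = ?B" by (simp only: sum_distrib_right[symmetric] sum_weights mult_1_left)
  finally have "(\<Sum>k<m. p k * ((r k \<bullet> bloch \<psi>) * (t k \<bullet> bloch e) + (r k \<bullet> bloch \<phi>) * (t k \<bullet> bloch f)))
                \<le> ?B" .
  moreover have "Re (sandwich e (\<Psi> (ketbra \<psi> \<psi>))) / 2 + Re (sandwich f (\<Psi> (ketbra \<phi> \<phi>))) / 2
      = (2 + (\<Sum>k<m. p k * ((r k \<bullet> bloch \<psi>) * (t k \<bullet> bloch e) + (r k \<bullet> bloch \<phi>) * (t k \<bullet> bloch f)))) / 4"
    unfolding Re_sandwich_ketbra_balanced[OF assms(1,2) \<psi> e] Re_sandwich_ketbra_balanced[OF assms(1,2) \<phi> f]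
    by (simp add: r_def t_def distrib_left sum.distrib field_simps)
  ultimately show ?thesis
    using max_norm_bloch_pairs[OF \<psi> \<phi> e f] by argo
qed

end

lemma UE_fidelity_sum_le:
  assumes "\<Psi> \<in> UE" "norm \<psi> = 1" "norm \<phi> = 1" "norm e = 1" "norm f = 1"
  shows "Re (sandwich e (\<Psi> (ketbra \<psi> \<psi>))) / 2 + Re (sandwich f (\<Psi> (ketbra \<phi> \<phi>))) / 2
         \<le> (1 + max (cmod (braket \<psi> \<phi>) * cmod (braket e f))
                    (sqrt ((1 - (cmod (braket \<psi> \<phi>))\<^sup>2) * (1 - (cmod (braket e f))\<^sup>2)))) / 2"
proof -
  have lin: "clinear2 \<Psi>" and eb: "entanglement_breaking2 \<Psi>"
    and tp: "trace_preserving2 \<Psi>" and un: "unital2 \<Psi>"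
    using assms(1) by (simp_all add: UE_def quantum_channel2_def)
  obtain m p \<sigma> \<tau> where "measure_prepare_repr \<Psi> m p \<sigma> \<tau>"
    using entanglement_breaking_measure_prepare_repr[OF lin eb] .
  then show ?thesis by (rule measure_prepare_repr.fidelity_sum_le[OF _ tp un assms(2-5)])
qed

section \<open>Measuring in an orthonormal basis and preparing another one\<close>

definition measure_prepare :: "cvec2 \<Rightarrow> cvec2 \<Rightarrow> cmat2 \<Rightarrow> cmat2" where
  "measure_prepare u v X =
     cscale (sandwich u X) (ketbra v v) + cscale (sandwich (perp u) X) (ketbra (perp v) (perp v))"

lemma clinear2_measure_prepare: "clinear2 (measure_prepare u v)"
  unfolding clinear2_def measure_prepare_def sandwich_add sandwich_cscale
  by (simp add: cscale_def vec_eq_iff algebra_simps)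

lemma trace_preserving2_measure_prepare:
  assumes "norm u = 1" "norm v = 1"
  shows "trace_preserving2 (measure_prepare u v)"
  using assms sandwich_add_perp[OF assms(1)]
  by (simp add: trace_preserving2_def measure_prepare_def ctrace_add ctrace_cscale ctrace_ketbra
      norm_perp flip: distrib_left)

lemma unital2_measure_prepare:
  assumes "norm u = 1" "norm v = 1"
  shows "unital2 (measure_prepare u v)"
proof -
  have "cscale 1 A = A" for A by (simp add: cscale_def vec_eq_iff)
  then show ?thesis
    using assms ketbra_add_perp[OF assms(2)]
    by (simp add: unital2_def measure_prepare_def sandwich_one norm_perp)
qed

definition block_quad :: "nat \<Rightarrow> (nat \<Rightarrow> nat \<Rightarrow> cmat2) \<Rightarrow> (nat \<Rightarrow> cvec2) \<Rightarrow> complex" where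
  "block_quad n M v = (\<Sum>a<n. \<Sum>b<n. \<Sum>i\<in>UNIV. \<Sum>j\<in>UNIV. cnj (v a $ i) * (M a b $ i $ j) * (v b $ j))"

lemma block_psd_iff: "block_psd n M \<longleftrightarrow> (\<forall>v. Im (block_quad n M v) = 0 \<and> 0 \<le> Re (block_quad n M v))"
  by (simp add: block_psd_def block_quad_def Let_def)

text \<open>The Kraus operators of \<open>measure_prepare u v\<close> are \<open>|v><u|\<close> and \<open>|perp v><perp u|\<close>.\<close>
lemma block_quad_measure_prepare:
  "block_quad n (\<lambda>a b. measure_prepare u v (M a b)) w
   = block_quad n M (\<lambda>a. braket v (w a) *s u) + block_quad n M (\<lambda>a. braket (perp v) (w a) *s perp u)"
proof -
  have "(\<Sum>i\<in>UNIV. \<Sum>j\<in>UNIV. cnj (x$i) * (measure_prepare u v K)$i$j * y$j)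
        = (\<Sum>i\<in>UNIV. \<Sum>j\<in>UNIV. cnj ((braket v x *s u)$i) * K$i$j * ((braket v y *s u)$j))
        + (\<Sum>i\<in>UNIV. \<Sum>j\<in>UNIV. cnj ((braket (perp v) x *s perp u)$i) * K$i$j * ((braket (perp v) y *s perp u)$j))"
    for x y K
    by (simp add: sum_2 measure_prepare_def cscale_def ketbra_def sandwich_expand braket_expand algebra_simps)
  then show ?thesis
    unfolding block_quad_def by (simp add: sum.distrib)
qed

lemma completely_positive2_measure_prepare: "completely_positive2 (measure_prepare u v)"
  unfolding completely_positive2_def block_psd_iff block_quad_measure_prepare by simp

lemma sum_sandwich_block_quad:
  "(\<Sum>a<2. \<Sum>b<2. cnj (w a) * sandwich x (M a b) * w b) = block_quad 2 M (\<lambda>a. w a *s x)"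
  by (simp add: block_quad_def sum_lessThan_2 sandwich_expand sum_2 algebra_simps)

lemma block_psd_sandwich_decomp:
  assumes "block_psd 2 \<rho>"
  obtains S where "ndensity 2 S"
    and "0 \<le> Re (sandwich x (\<rho> 0 0) + sandwich x (\<rho> 1 1))"
    and "\<forall>a<2. \<forall>b<2. sandwich x (\<rho> a b) = of_real (Re (sandwich x (\<rho> 0 0) + sandwich x (\<rho> 1 1))) * S a b"
proof -
  let ?A = "\<lambda>a b. sandwich x (\<rho> a b)"
  have psd: "psd2 (transpose (mat2_of ?A))"
    unfolding psd2_transpose_mat2_of_iff sum_sandwich_block_quad
    using assms by (simp add: block_psd_iff)
  have tr: "ctrace (transpose (mat2_of ?A)) = ?A 0 0 + ?A 1 1"
    by (simp add: ctrace_expand transpose_def mat2_of_def nat_of_2_def)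
  obtain D where D: "density2 D" "transpose (mat2_of ?A) = cscale (of_real (Re (?A 0 0 + ?A 1 1))) D"
    using psd2_eq_cscale_density2[OF psd] unfolding tr by blast
  define S where "S a b = D $ two_of_nat b $ two_of_nat a" for a b
  have "transpose (mat2_of S) = D"
    by (simp add: S_def mat2_of_def transpose_def vec_eq_iff)
  then have "ndensity 2 S" using D(1) by (simp add: ndensity2_iff_density2_transpose)
  moreover have "0 \<le> Re (?A 0 0 + ?A 1 1)"
    using psd2_entries(3,4)[OF psd] by (simp add: transpose_def mat2_of_def nat_of_2_def)
  moreover have "?A a b = of_real (Re (?A 0 0 + ?A 1 1)) * S a b" if "a < 2" "b < 2" for a b
    using arg_cong[OF D(2), of "\<lambda>M. M $ two_of_nat b $ two_of_nat a"] that
    by (simp add: S_def mat2_of_def transpose_def cscale_def)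
  ultimately show ?thesis using that by blast
qed

lemma entanglement_breaking2_measure_prepare:
  assumes u: "norm u = 1" and v: "norm v = 1"
  shows "entanglement_breaking2 (measure_prepare u v)"
  unfolding entanglement_breaking2_def
proof (intro allI impI)
  fix \<rho> assume \<rho>: "block_density 2 \<rho>"
  then have psd: "block_psd 2 \<rho>" and tr: "ctrace (\<rho> 0 0) + ctrace (\<rho> 1 1) = 1"
    by (simp_all add: block_density_def sum_lessThan_2)
  define t where "t x = Re (sandwich x (\<rho> 0 0) + sandwich x (\<rho> 1 1))" for x
  obtain S0 where S0: "ndensity 2 S0" "0 \<le> t u" "\<forall>a<2. \<forall>b<2. sandwich u (\<rho> a b) = of_real (t u) * S0 a b"
    using block_psd_sandwich_decomp[OF psd, where x=u] unfolding t_def by blast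
  obtain S1 where S1: "ndensity 2 S1" "0 \<le> t (perp u)"
    "\<forall>a<2. \<forall>b<2. sandwich (perp u) (\<rho> a b) = of_real (t (perp u)) * S1 a b"
    using block_psd_sandwich_decomp[OF psd, where x="perp u"] unfolding t_def by blast
  define p where "p k = (if k = 0 then t u else t (perp u))" for k :: nat
  define S where "S k = (if k = 0 then S0 else S1)" for k :: nat
  define \<tau> where "\<tau> k = (if k = 0 then ketbra v v else ketbra (perp v) (perp v))" for k :: nat
  have "\<forall>k<2. 0 \<le> p k \<and> ndensity 2 (S k) \<and> density2 (\<tau> k)"
    using S0 S1 v by (simp add: less_2_cases_iff p_def S_def \<tau>_def density2_ketbra norm_perp)
  moreover have "(\<Sum>k<2. p k) = 1"
  proof -
    have "(\<Sum>k<2. p k) = Re (ctrace (\<rho> 0 0) + ctrace (\<rho> 1 1))"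
      by (simp add: sum_lessThan_2 p_def t_def flip: sandwich_add_perp[OF u])
    also have "\<dots> = 1" by (simp only: tr one_complex.sel(1))
    finally show ?thesis .
  qed
  moreover have "\<forall>a<2. \<forall>b<2. measure_prepare u v (\<rho> a b) = (\<Sum>k<2. cscale (of_real (p k) * S k a b) (\<tau> k))"
    using S0(3) S1(3) by (simp add: sum_lessThan_2 p_def S_def \<tau>_def measure_prepare_def)
  ultimately show "separable22 (\<lambda>a b. measure_prepare u v (\<rho> a b))"
    unfolding separable22_def by blast
qed

lemma measure_prepare_in_UE: "norm u = 1 \<Longrightarrow> norm v = 1 \<Longrightarrow> measure_prepare u v \<in> UE"
  by (simp add: UE_def quantum_channel2_def clinear2_measure_prepare completely_positive2_measure_prepare
      trace_preserving2_measure_prepare unital2_measure_prepare entanglement_breaking2_measure_prepare)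

lemma measure_prepare_ketbra:
  assumes "norm u = 1" "norm x = 1"
  shows "measure_prepare u v (ketbra x x)
         = cscale (of_real ((cmod (braket x u))\<^sup>2)) (ketbra v v)
         + cscale (of_real (1 - (cmod (braket x u))\<^sup>2)) (ketbra (perp v) (perp v))"
  using cmod_braket_sq_perp[OF assms(2,1)] by (simp add: measure_prepare_def sandwich_ketbra)

lemma Re_sandwich_measure_prepare_ketbra:
  assumes "norm u = 1" "norm v = 1" "norm x = 1" "norm y = 1"
  shows "Re (sandwich y (measure_prepare u v (ketbra x x)))
         = (1 + (bloch u \<bullet> bloch x) * (bloch v \<bullet> bloch y)) / 2"
proof -
  have "Re (sandwich y (measure_prepare u v (ketbra x x)))
        = (cmod (braket x u))\<^sup>2 * (cmod (braket y v))\<^sup>2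
          + (1 - (cmod (braket x u))\<^sup>2) * (1 - (cmod (braket y v))\<^sup>2)"
    using assms cmod_braket_sq_perp[of y v]
    by (simp add: measure_prepare_ketbra sandwich_add sandwich_cscale sandwich_ketbra cmod_braket_commute)
  also have "\<dots> = (1 + (bloch u \<bullet> bloch x) * (bloch v \<bullet> bloch y)) / 2"
    using assms by (simp add: cmod_braket_sq_bloch inner_commute field_simps)
  finally show ?thesis .
qed

section \<open>The maximal fidelity and joint convertibility\<close>

lemma UE_fidelity_sum_attained:
  assumes "norm \<psi> = 1" "norm \<phi> = 1" "norm e = 1" "norm f = 1"
  shows "\<exists>\<Psi>\<in>UE. Re (sandwich e (\<Psi> (ketbra \<psi> \<psi>))) / 2 + Re (sandwich f (\<Psi> (ketbra \<phi> \<phi>))) / 2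
           = (1 + max (cmod (braket \<psi> \<phi>) * cmod (braket e f))
                      (sqrt ((1 - (cmod (braket \<psi> \<phi>))\<^sup>2) * (1 - (cmod (braket e f))\<^sup>2)))) / 2"
proof -
  obtain m t :: "real^3" where mt: "norm m = 1" "norm t = 1"
    "(m \<bullet> bloch \<psi>) * (t \<bullet> bloch e) + (m \<bullet> bloch \<phi>) * (t \<bullet> bloch f)
     = max (norm (bloch \<psi> + bloch \<phi>) * norm (bloch e + bloch f))
           (norm (bloch \<psi> - bloch \<phi>) * norm (bloch e - bloch f)) / 2"
    using inner_unit_pairs_max_attained[of "bloch \<psi>" "bloch \<phi>" "bloch e" "bloch f"] assms
    by (auto simp: norm_bloch)
  obtain u where u: "norm u = 1" "bloch u = m" using bloch_surj[OF mt(1)] .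
  obtain v where v: "norm v = 1" "bloch v = t" using bloch_surj[OF mt(2)] .
  have "Re (sandwich e (measure_prepare u v (ketbra \<psi> \<psi>))) / 2
        + Re (sandwich f (measure_prepare u v (ketbra \<phi> \<phi>))) / 2
        = (2 + ((m \<bullet> bloch \<psi>) * (t \<bullet> bloch e) + (m \<bullet> bloch \<phi>) * (t \<bullet> bloch f))) / 4"
    using u v assms by (simp add: Re_sandwich_measure_prepare_ketbra field_simps)
  also have "\<dots> = (1 + max (cmod (braket \<psi> \<phi>) * cmod (braket e f))
                      (sqrt ((1 - (cmod (braket \<psi> \<phi>))\<^sup>2) * (1 - (cmod (braket e f))\<^sup>2)))) / 2"
    unfolding mt(3) max_norm_bloch_pairs[OF assms] by simp
  finally show ?thesis
    using measure_prepare_in_UE[OF u(1) v(1)] by blast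
qed

lemma fidelity_sum_eq_1_if_jointly_convertible:
  assumes "jointly_convertible X \<psi> \<phi> e f" "norm e = 1" "norm f = 1"
  obtains \<Psi> where "\<Psi> \<in> X"
    and "Re (sandwich e (\<Psi> (ketbra \<psi> \<psi>))) / 2 + Re (sandwich f (\<Psi> (ketbra \<phi> \<phi>))) / 2 = 1"
  using assms by (auto simp: jointly_convertible_def sandwich_ketbra braket_self)

lemma jointly_convertible_UE:
  assumes \<psi>: "norm \<psi> = 1" and \<phi>: "norm \<phi> = 1" and e: "norm e = 1" and f: "norm f = 1"
    and "(cmod (braket \<psi> \<phi>) = 1 \<and> cmod (braket e f) = 1) \<or> (cmod (braket \<psi> \<phi>) = 0 \<and> cmod (braket e f) = 0)"
  shows "jointly_convertible UE \<psi> \<phi> e f"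
proof -
  have "measure_prepare \<psi> e (ketbra \<psi> \<psi>) = ketbra e e"
    using \<psi> by (simp add: measure_prepare_ketbra braket_self cscale_def vec_eq_iff)
  moreover have "measure_prepare \<psi> e (ketbra \<phi> \<phi>) = ketbra f f"
    using assms(5)
  proof
    assume *: "cmod (braket \<psi> \<phi>) = 1 \<and> cmod (braket e f) = 1"
    then have "measure_prepare \<psi> e (ketbra \<phi> \<phi>) = ketbra e e"
      using \<psi> \<phi> by (simp add: measure_prepare_ketbra cmod_braket_commute cscale_def vec_eq_iff)
    also have "\<dots> = ketbra f f" using ketbra_eq_if_cmod_braket_eq_1 e f * by blast
    finally show ?thesis .
  next
    assume *: "cmod (braket \<psi> \<phi>) = 0 \<and> cmod (braket e f) = 0"
    then have "measure_prepare \<psi> e (ketbra \<phi> \<phi>) = ketbra (perp e) (perp e)"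
      using \<psi> \<phi> by (simp add: measure_prepare_ketbra cmod_braket_commute cscale_def vec_eq_iff)
    also have "\<dots> = ketbra f f"
    proof (rule ketbra_eq_if_cmod_braket_eq_1)
      have "(cmod (braket f (perp e)))\<^sup>2 = 1"
        using cmod_braket_sq_perp[OF f e] * by (simp add: cmod_braket_commute)
      then show "cmod (braket (perp e) f) = 1"
        using norm_ge_zero[of "braket f (perp e)"] by (auto simp: cmod_braket_commute power2_eq_1_iff)
    qed (simp_all add: e f norm_perp)
    finally show ?thesis .
  qed
  ultimately show ?thesis
    unfolding jointly_convertible_def using measure_prepare_in_UE[OF \<psi> e] by blast
qed

theorem corollary3:
  fixes \<psi> \<phi> e f :: cvec2
  assumes "norm \<psi> = 1" and "norm \<phi> = 1" and "norm e = 1" and "norm f = 1"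
  defines "F \<equiv> (\<lambda>\<Psi>. Re (sandwich e (\<Psi> (ketbra \<psi> \<psi>))) / 2
                     + Re (sandwich f (\<Psi> (ketbra \<phi> \<phi>))) / 2)"
      and "a \<equiv> cmod (braket \<psi> \<phi>)" and "b \<equiv> cmod (braket e f)"
      and "V \<equiv> (1 + max (cmod (braket \<psi> \<phi>) * cmod (braket e f))
                    (sqrt ((1 - (cmod (braket \<psi> \<phi>))\<^sup>2) * (1 - (cmod (braket e f))\<^sup>2)))) / 2"
  shows "(\<exists>\<Psi>\<in>UE. F \<Psi> = V) \<and> (\<forall>\<Psi>\<in>UE. F \<Psi> \<le> V)
         \<and> (V = 1 \<longleftrightarrow> (a = 1 \<and> b = 1) \<or> (a = 0 \<and> b = 0))
         \<and> (jointly_convertible UE \<psi> \<phi> e f \<longleftrightarrow> (a = 1 \<and> b = 1) \<or> (a = 0 \<and> b = 0))"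
proof -
  have V: "V = (1 + max (a * b) (sqrt ((1 - a\<^sup>2) * (1 - b\<^sup>2)))) / 2"
    by (simp add: V_def a_def b_def)
  have ab: "0 \<le> a" "a \<le> 1" "0 \<le> b" "b \<le> 1"
    using cmod_braket_le_1 assms(1-4) by (simp_all add: a_def b_def)
  have attained: "\<exists>\<Psi>\<in>UE. F \<Psi> = V"
    using UE_fidelity_sum_attained[OF assms(1-4)] by (simp add: F_def V_def)
  have upper: "\<forall>\<Psi>\<in>UE. F \<Psi> \<le> V"
    using UE_fidelity_sum_le[OF _ assms(1-4)] by (simp add: F_def V_def)
  have V_eq_1: "V = 1 \<longleftrightarrow> (a = 1 \<and> b = 1) \<or> (a = 0 \<and> b = 0)"
    unfolding V using max_overlap_eq_1_iff[OF ab] by simp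
  have "V = 1" if jc: "jointly_convertible UE \<psi> \<phi> e f"
  proof -
    obtain \<Psi> where "\<Psi> \<in> UE" "F \<Psi> = 1"
      using fidelity_sum_eq_1_if_jointly_convertible[OF jc assms(3,4)] unfolding F_def by blast
    then have "1 \<le> V" using upper by fastforce
    moreover have "V \<le> 1" unfolding V using max_overlap_le_1[OF ab] by simp
    ultimately show "V = 1" by simp
  qed
  then have "jointly_convertible UE \<psi> \<phi> e f \<longleftrightarrow> (a = 1 \<and> b = 1) \<or> (a = 0 \<and> b = 0)"
    using V_eq_1 jointly_convertible_UE[OF assms(1-4)] by (auto simp: a_def b_def)
  with attained upper V_eq_1 show ?thesis by blast
qed

end
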